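(* Let $M$ be a monoid and $M_0,M_1,M_2$ submonoids of $M$ with $M_0\subseteq M_1\cap M_2$, such that $M$ is the free amalgamated product $M=M_1\ast_{M_0}M_2$ (with respect to the inclusions of $M_0$ into $M_1$ and $M_2$). Regard $\mathbb{Z}$ as the trivial right $M_j$-module ($n\cdot a=n$ for $a\in M_j$) and $\mathbb{Z}$ as the trivial right $M$-module. Define right $M$-module homomorphisms $i:\mathbb{Z}\otimes_{M_0}\mathbb{Z}M\to \mathbb{Z}\otimes_{M_1}\mathbb{Z}M\oplus\mathbb{Z}\otimes_{M_2}\mathbb{Z}M$ by $i(1\otimes_{M_0}w)=1\otimes_{M_1}w+1\otimes_{M_2}w$, and $p:\mathbb{Z}\otimes_{M_1}\mathbb{Z}M\oplus\mathbb{Z}\otimes_{M_2}\mathbb{Z}M\to\mathbb{Z}$ by $p(1\otimes_{M_1}v)=1$ and $p(1\otimes_{M_2}u)=-1$ for $u,v,w\in M$ (extended linearly). Then the sequence of right $M$-modules $$0\to \mathbb{Z}\otimes_{M_0}\mathbb{Z}M\xrightarrow{\ i\ }\mathbb{Z}\otimes_{M_1}\mathbb{Z}M\oplus\mathbb{Z}\otimes_{M_2}\mathbb{Z}M\xrightarrow{\ p\ }\mathbb{Z}\to 0$$ is exact.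
   Context: For monoids $M_1,M_2$ containing a common submonoid $M_0$ (identified via embeddings), the free amalgamated product $M_1\ast_{M_0}M_2$ is the quotient of the monoid free product $M_1\ast M_2$ by the least congruence identifying the image of each $u\in M_0$ in $M_1$ with its image in $M_2$. Here $M=M_1\ast_{M_0}M_2$ means that the natural map from this amalgamated product to $M$ induced by the inclusions is an isomorphism. $\otimes_{M_j}$ denotes tensor product over $\mathbb{Z}M_j$, with $\mathbb{Z}M$ a left $\mathbb{Z}M_j$-module by left multiplication; the result is a right $M$-module via right multiplication on $\mathbb{Z}M$. *)

theory Defs
  imports Main "HOL-Library.Poly_Mapping"
begin

definition submonoid :: "'a::monoid_mult set \<Rightarrow> bool" where
  "submonoid S \<longleftrightarrow> 1 \<in> S \<and> (\<forall>x\<in>S. \<forall>y\<in>S. x * y \<in> S)"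

(* Words in the free monoid on the disjoint union of M1 (Inl) and M2 (Inr). *)
definition letters :: "'a set \<Rightarrow> 'a set \<Rightarrow> ('a + 'a) set" where
  "letters M1 M2 = Inl ` M1 \<union> Inr ` M2"

definition eval_word :: "('a::monoid_mult + 'a) list \<Rightarrow> 'a" where
  "eval_word w = foldr (\<lambda>l acc. (case l of Inl x \<Rightarrow> x | Inr x \<Rightarrow> x) * acc) w 1"

inductive amal_gen :: "'a::monoid_mult set \<Rightarrow> 'a set \<Rightarrow> 'a set \<Rightarrow> ('a + 'a) list \<Rightarrow> ('a + 'a) list \<Rightarrow> bool"
  for M0 M1 M2 where
  mult1: "x \<in> M1 \<Longrightarrow> y \<in> M1 \<Longrightarrow> amal_gen M0 M1 M2 [Inl x, Inl y] [Inl (x * y)]"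
| one1: "amal_gen M0 M1 M2 [Inl 1] []"
| mult2: "x \<in> M2 \<Longrightarrow> y \<in> M2 \<Longrightarrow> amal_gen M0 M1 M2 [Inr x, Inr y] [Inr (x * y)]"
| one2: "amal_gen M0 M1 M2 [Inr 1] []"
| amal: "u \<in> M0 \<Longrightarrow> amal_gen M0 M1 M2 [Inl u] [Inr u]"

inductive amal_step :: "'a::monoid_mult set \<Rightarrow> 'a set \<Rightarrow> 'a set \<Rightarrow> ('a + 'a) list \<Rightarrow> ('a + 'a) list \<Rightarrow> bool"
  for M0 M1 M2 where
  "amal_gen M0 M1 M2 l r \<Longrightarrow> u \<in> lists (letters M1 M2) \<Longrightarrow> v \<in> lists (letters M1 M2)
    \<Longrightarrow> amal_step M0 M1 M2 (u @ l @ v) (u @ r @ v)"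

definition amal_cong :: "'a::monoid_mult set \<Rightarrow> 'a set \<Rightarrow> 'a set \<Rightarrow> ('a + 'a) list \<Rightarrow> ('a + 'a) list \<Rightarrow> bool" where
  "amal_cong M0 M1 M2 = equivclp (amal_step M0 M1 M2)"

(* The whole monoid (the type 'a) is the free amalgamated product: the natural
  map from (words modulo the congruence) to 'a, induced by the inclusions, is bijective. *)
definition is_free_amalgam :: "'a::monoid_mult set \<Rightarrow> 'a set \<Rightarrow> 'a set \<Rightarrow> bool" where
  "is_free_amalgam M0 M1 M2 \<longleftrightarrow>
     (\<forall>m. \<exists>w \<in> lists (letters M1 M2). eval_word w = m) \<and>
     (\<forall>w \<in> lists (letters M1 M2). \<forall>w' \<in> lists (letters M1 M2).
        eval_word w = eval_word w' \<longrightarrow> amal_cong M0 M1 M2 w w')"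

(* ZM is the type 'a =>0 int. Z (x)_{Mj} ZM (Z trivial) is ZM modulo the subgroup
  generated by the elements 1(a w) - 1w, i.e. single (a*w) 1 - single w 1, a  Mj. *)
inductive_set aug_ker :: "'a::monoid_mult set \<Rightarrow> ('a \<Rightarrow>\<^sub>0 int) set" for Mj where
  zero: "0 \<in> aug_ker Mj"
| gen: "a \<in> Mj \<Longrightarrow> Poly_Mapping.single (a * w) 1 - Poly_Mapping.single w 1 \<in> aug_ker Mj"
| add: "x \<in> aug_ker Mj \<Longrightarrow> y \<in> aug_ker Mj \<Longrightarrow> x + y \<in> aug_ker Mj"
| neg: "x \<in> aug_ker Mj \<Longrightarrow> - x \<in> aug_ker Mj"

definition tcoset :: "'a::monoid_mult set \<Rightarrow> ('a \<Rightarrow>\<^sub>0 int) \<Rightarrow> ('a \<Rightarrow>\<^sub>0 int) set" where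
  "tcoset Mj x = {y. x - y \<in> aug_ker Mj}"

(* Carrier of Z (x)_{Mj} ZM; the class tcoset Mj (single w 1) is 1 (x)_{Mj} w. *)
definition tens :: "'a::monoid_mult set \<Rightarrow> ('a \<Rightarrow>\<^sub>0 int) set set" where
  "tens Mj = range (tcoset Mj)"

(* i(1 (x)_{M0} w) = (1 (x)_{M1} w, 1 (x)_{M2} w), extended linearly: a class c is sent to
  the classes of its representatives. *)
definition tens_i :: "'a::monoid_mult set \<Rightarrow> 'a set \<Rightarrow> ('a \<Rightarrow>\<^sub>0 int) set \<Rightarrow>
    ('a \<Rightarrow>\<^sub>0 int) set \<times> ('a \<Rightarrow>\<^sub>0 int) set" where
  "tens_i M1 M2 c = ({y. \<exists>x\<in>c. x - y \<in> aug_ker M1}, {y. \<exists>x\<in>c. x - y \<in> aug_ker M2})"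

definition aug :: "('a \<Rightarrow>\<^sub>0 int) \<Rightarrow> int" where
  "aug x = (\<Sum>w\<in>Poly_Mapping.keys x. Poly_Mapping.lookup x w)"

(* p(1 (x)_{M1} v) = 1, p(1 (x)_{M2} u) = -1, extended linearly. *)
definition tens_p :: "('a \<Rightarrow>\<^sub>0 int) set \<times> ('a \<Rightarrow>\<^sub>0 int) set \<Rightarrow> int" where
  "tens_p b = (THE n. \<exists>x\<in>fst b. \<exists>y\<in>snd b. n = aug x - aug y)"

end

theory Submission
  imports Defs "HOL-Library.Set_Algebras"
begin

text \<open>
Write Kj for aug_ker Mj, so that the j-th tensor module is ZM / Kj. Injectivity of i
amounts to K1 \<inter> K2 \<subseteq> K0, exactness in the middle to every x of augmentation 0
lying in K1 + K2, and p is clearly onto.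

Since M is generated by M1 \<union> M2, telescoping 1 - w along a word for w writes it as a sum of
terms v - a v with a in M1 or in M2; this gives exactness in the middle.

For injectivity, Kj is the common kernel of the pairings of ZM with the left Mj-invariant
functions M \<rightarrow> Z, so it suffices to split every M0-invariant f as g - (g - f) with g
M1-invariant and g - f M2-invariant. Take g (w) to be the sum of f (b v) - f v over the
M2-letters b of a word for w, with v the value of the part of the word after b. Because f is
M0-invariant, this sum is unchanged by the defining relations of the amalgamated product,
so g is well defined on M.
\<close>

lemma aug_ker_diff: "x \<in> aug_ker M \<Longrightarrow> y \<in> aug_ker M \<Longrightarrow> x - y \<in> aug_ker M"
  by (metis aug_ker.add aug_ker.neg diff_conv_add_uminus)

lemma aug_ker_mono: "M \<subseteq> M' \<Longrightarrow> aug_ker M \<subseteq> aug_ker M'"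
proof
  fix x assume "x \<in> aug_ker M" and "M \<subseteq> M'"
  then show "x \<in> aug_ker M'"
    by induction (auto intro: aug_ker.intros)
qed

definition pairing :: "('a \<Rightarrow> int) \<Rightarrow> ('a \<Rightarrow>\<^sub>0 int) \<Rightarrow> int" where
  "pairing h x = (\<Sum>w\<in>Poly_Mapping.keys x. Poly_Mapping.lookup x w * h w)"

lemma pairing_eq_sum_superset:
  "finite S \<Longrightarrow> Poly_Mapping.keys x \<subseteq> S \<Longrightarrow> pairing h x = (\<Sum>w\<in>S. Poly_Mapping.lookup x w * h w)"
  unfolding pairing_def by (intro sum.mono_neutral_left) (auto simp: in_keys_iff)

lemma pairing_diff: "pairing h (x - y) = pairing h x - pairing h y"
proof -
  let ?S = "Poly_Mapping.keys x \<union> Poly_Mapping.keys y"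
  have "Poly_Mapping.keys (x - y) \<subseteq> ?S"
    by (auto simp: in_keys_iff lookup_minus)
  then show ?thesis
    by (simp add: pairing_eq_sum_superset[of ?S] lookup_minus left_diff_distrib sum_subtractf)
qed

lemma pairing_zero [simp]: "pairing h 0 = 0"
  by (simp add: pairing_def)

lemma pairing_frag_of [simp]: "pairing h (frag_of w) = h w"
  by (simp add: pairing_def)

lemma pairing_add: "pairing h (x + y) = pairing h x + pairing h y"
  using pairing_diff[of h x "- y"] pairing_diff[of h 0 y] by simp

lemma pairing_uminus: "pairing h (- x) = - pairing h x"
  using pairing_diff[of h 0 x] by simp

lemma pairing_diff_fun: "pairing (\<lambda>w. g w - h w) x = pairing g x - pairing h x"
  by (simp add: pairing_def right_diff_distrib sum_subtractf)

lemma aug_eq_pairing: "aug x = pairing (\<lambda>_. 1) x"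
  by (simp add: aug_def pairing_def)

definition left_invariant :: "'a::monoid_mult set \<Rightarrow> ('a \<Rightarrow> 'b) \<Rightarrow> bool" where
  "left_invariant M h \<longleftrightarrow> (\<forall>a\<in>M. \<forall>w. h (a * w) = h w)"

lemma pairing_eq_0_if_aug_ker:
  assumes "left_invariant M h" "x \<in> aug_ker M"
  shows "pairing h x = 0"
  using assms(2)
  by induction (use assms(1) in \<open>auto simp: left_invariant_def pairing_diff pairing_add pairing_uminus\<close>)

lemma aug_diff: "aug (x - y) = aug x - aug y"
  by (simp add: aug_eq_pairing pairing_diff)

lemma aug_eq_0_if_aug_ker: "x \<in> aug_ker M \<Longrightarrow> aug x = 0"
  unfolding aug_eq_pairing by (rule pairing_eq_0_if_aug_ker) (simp_all add: left_invariant_def)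

lemma aug_ker_if_pairing_eq_0:
  assumes "\<And>h. left_invariant M (h :: 'a::monoid_mult \<Rightarrow> int) \<Longrightarrow> pairing h x = 0"
  shows "x \<in> aug_ker M"
proof -
  define R where "R w w' \<longleftrightarrow> frag_of w - frag_of w' \<in> aug_ker M" for w w'
  have R_sym: "R w' w" if "R w w'" for w w'
    using aug_ker.neg[OF that[unfolded R_def]] by (simp add: R_def)
  have R_trans: "R w w''" if "R w w'" "R w' w''" for w w' w''
    using aug_ker.add[OF that[unfolded R_def]] by (simp add: R_def)
  define r where "r w = (SOME c. R c w)" for w
  have R_r: "R (r w) w" for w
    unfolding r_def by (rule someI[of _ w]) (simp add: R_def aug_ker.zero)
  have r_eq: "r w = r w'" if "R w w'" for w w'
    unfolding r_def using R_trans R_sym that by metis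
  \<comment> \<open>\<rho> replaces every w by a fixed representative of its class modulo aug_ker M;
    the indicators of these classes are M-invariant, so the hypothesis forces \<rho> x = 0.\<close>
  define \<rho> where "\<rho> = frag_extend (frag_of \<circ> r)"
  have "x - \<rho> x \<in> aug_ker M"
    using subset_UNIV
  proof (induction x rule: frag_induction)
    case zero then show ?case by (simp add: \<rho>_def aug_ker.zero)
  next
    case (one w) then show ?case using R_sym[OF R_r] by (simp add: \<rho>_def R_def)
  next
    case (diff a b)
    have "a - b - \<rho> (a - b) = (a - \<rho> a) - (b - \<rho> b)"
      unfolding \<rho>_def frag_extend_diff by (simp add: algebra_simps)
    with diff show ?case by (metis aug_ker_diff)
  qed
  moreover have "\<rho> x = 0"
  proof (rule poly_mapping_eqI)
    fix c
    define h where "h w = (if r w = c then 1 else 0 :: int)" for w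
    have "Poly_Mapping.lookup (\<rho> y) c = pairing h y" for y
      using subset_UNIV
      by (induction y rule: frag_induction) (simp_all add: \<rho>_def h_def frag_extend_diff lookup_minus pairing_diff)
    moreover have "left_invariant M h"
      unfolding left_invariant_def h_def using r_eq aug_ker.gen R_def by metis
    ultimately show "Poly_Mapping.lookup (\<rho> x) c = Poly_Mapping.lookup 0 c"
      using assms by simp
  qed
  ultimately show ?thesis by simp
qed

lemma eval_word_Nil [simp]: "eval_word [] = 1"
  by (simp add: eval_word_def)

lemma eval_word_Cons_Inl [simp]: "eval_word (Inl a # u) = a * eval_word u"
  by (simp add: eval_word_def)

lemma eval_word_Cons_Inr [simp]: "eval_word (Inr b # u) = b * eval_word u"
  by (simp add: eval_word_def)

lemma eval_word_append: "eval_word (u @ v) = eval_word u * eval_word v"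
proof (induction u)
  case (Cons l u)
  then show ?case by (cases l) (simp_all add: mult.assoc)
qed simp

fun inr_jumps :: "('a::monoid_mult \<Rightarrow> int) \<Rightarrow> ('a + 'a) list \<Rightarrow> int" where
  "inr_jumps f [] = 0"
| "inr_jumps f (Inl a # u) = inr_jumps f u"
| "inr_jumps f (Inr b # u) = f (b * eval_word u) - f (eval_word u) + inr_jumps f u"

lemma inr_jumps_append_left:
  assumes "inr_jumps f w = inr_jumps f w'" "eval_word w = eval_word w'"
  shows "inr_jumps f (u @ w) = inr_jumps f (u @ w')"
proof (induction u)
  case (Cons l u)
  then show ?case
    using assms(2) by (cases l) (simp_all add: eval_word_append)
qed (use assms(1) in simp)

lemma amal_gen_eval_word: "amal_gen M0 M1 M2 l r \<Longrightarrow> eval_word l = eval_word r"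
  by (induction rule: amal_gen.induct) simp_all

lemma inr_jumps_amal_gen:
  assumes "left_invariant M0 f" "amal_gen M0 M1 M2 l r"
  shows "inr_jumps f (l @ v) = inr_jumps f (r @ v)"
  using assms(2) by cases (use assms(1) in \<open>simp_all add: left_invariant_def mult.assoc\<close>)

lemma inr_jumps_amal_step:
  assumes "left_invariant M0 f" "amal_step M0 M1 M2 w w'"
  shows "inr_jumps f w = inr_jumps f w'"
  using assms(2)
proof cases
  case (1 l r u v)
  have "eval_word (l @ v) = eval_word (r @ v)"
    using amal_gen_eval_word[OF 1(3)] by (simp add: eval_word_append)
  with 1 show ?thesis
    using inr_jumps_append_left inr_jumps_amal_gen[OF assms(1)] by (metis append.assoc)
qed

lemma inr_jumps_amal_cong:
  assumes "left_invariant M0 f" "amal_cong M0 M1 M2 w w'"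
  shows "inr_jumps f w = inr_jumps f w'"
  using assms(2) unfolding amal_cong_def
  by (induction rule: equivclp_induct) (auto dest: inr_jumps_amal_step[OF assms(1)])

lemma left_invariant_split:
  fixes f :: "'a::monoid_mult \<Rightarrow> int"
  assumes amalgam: "is_free_amalgam M0 M1 M2" and "left_invariant M0 f"
  obtains g where "left_invariant M1 g" and "left_invariant M2 (\<lambda>w. g w - f w)"
proof
  define word where "word m = (SOME w. w \<in> lists (letters M1 M2) \<and> eval_word w = m)" for m
  have word: "word m \<in> lists (letters M1 M2)" "eval_word (word m) = m" for m
    using someI_ex[of "\<lambda>w. w \<in> lists (letters M1 M2) \<and> eval_word w = m"] amalgam
    unfolding word_def is_free_amalgam_def by blast+
  define g where "g m = inr_jumps f (word m)" for m
  have g_eval_word: "g (eval_word w) = inr_jumps f w" if "w \<in> lists (letters M1 M2)" for w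
    using amalgam word that inr_jumps_amal_cong[OF assms(2)]
    unfolding g_def is_free_amalgam_def by blast
  have "g (a * m) = g m" if "a \<in> M1" for a m
  proof -
    have "Inl a # word m \<in> lists (letters M1 M2)"
      using word that by (simp add: letters_def)
    from g_eval_word[OF this] show ?thesis
      by (simp add: word g_def)
  qed
  then show "left_invariant M1 g"
    by (simp add: left_invariant_def)
  have "g (b * m) = f (b * m) - f m + g m" if "b \<in> M2" for b m
  proof -
    have "Inr b # word m \<in> lists (letters M1 M2)"
      using word that by (simp add: letters_def)
    from g_eval_word[OF this] show ?thesis
      by (simp add: word g_def)
  qed
  then show "left_invariant M2 (\<lambda>w. g w - f w)"
    by (simp add: left_invariant_def)
qed

lemma aug_ker_Int:
  assumes amalgam: "is_free_amalgam M0 M1 M2"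
  shows "aug_ker M1 \<inter> aug_ker M2 \<subseteq> aug_ker M0"
proof
  fix x assume x: "x \<in> aug_ker M1 \<inter> aug_ker M2"
  show "x \<in> aug_ker M0"
  proof (rule aug_ker_if_pairing_eq_0)
    fix f :: "'a \<Rightarrow> int" assume "left_invariant M0 f"
    then obtain g where "left_invariant M1 g" "left_invariant M2 (\<lambda>w. g w - f w)"
      using left_invariant_split[OF amalgam] by blast
    with x have "pairing g x = 0" "pairing (\<lambda>w. g w - f w) x = 0"
      by (simp_all add: pairing_eq_0_if_aug_ker)
    then show "pairing f x = 0"
      by (simp add: pairing_diff_fun)
  qed
qed

lemma aug_ker_plus_diff:
  assumes "x \<in> aug_ker M1 + aug_ker M2" "y \<in> aug_ker M1 + aug_ker M2"
  shows "x - y \<in> aug_ker M1 + aug_ker M2"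
proof -
  obtain a b c d where "x = a + b" "y = c + d"
    and "a \<in> aug_ker M1" "c \<in> aug_ker M1" "b \<in> aug_ker M2" "d \<in> aug_ker M2"
    using assms by (auto elim!: set_plus_elim)
  then have "x - y = (a - c) + (b - d)" "a - c \<in> aug_ker M1" "b - d \<in> aug_ker M2"
    by (simp_all add: aug_ker_diff)
  then show ?thesis by (simp add: set_plus_intro)
qed

lemma aug_ker_subset_plus:
  shows "aug_ker M1 \<subseteq> aug_ker M1 + aug_ker M2" and "aug_ker M2 \<subseteq> aug_ker M1 + aug_ker M2"
proof -
  have "x + 0 \<in> aug_ker M1 + aug_ker M2" if "x \<in> aug_ker M1" for x
    using that aug_ker.zero by (rule set_plus_intro)
  moreover have "0 + x \<in> aug_ker M1 + aug_ker M2" if "x \<in> aug_ker M2" for x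
    using aug_ker.zero that by (rule set_plus_intro)
  ultimately show "aug_ker M1 \<subseteq> aug_ker M1 + aug_ker M2" "aug_ker M2 \<subseteq> aug_ker M1 + aug_ker M2"
    by auto
qed

lemma zero_in_aug_ker_plus: "0 \<in> aug_ker M1 + aug_ker M2"
  using aug_ker_subset_plus(1) aug_ker.zero by blast

lemma frag_of_eval_word_in_aug_ker_plus:
  "u \<in> lists (letters M1 M2) \<Longrightarrow> frag_of 1 - frag_of (eval_word u) \<in> aug_ker M1 + aug_ker M2"
proof (induction u)
  case Nil
  then show ?case using zero_in_aug_ker_plus by simp
next
  case (Cons l u)
  let ?d = "frag_of (eval_word (l # u)) - frag_of (eval_word u)"
  have IH: "frag_of 1 - frag_of (eval_word u) \<in> aug_ker M1 + aug_ker M2"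
    using Cons by simp
  have "?d \<in> aug_ker M1 \<or> ?d \<in> aug_ker M2"
    using Cons.prems by (cases l) (auto simp: letters_def aug_ker.gen)
  then have "?d \<in> aug_ker M1 + aug_ker M2"
    using aug_ker_subset_plus by blast
  from aug_ker_plus_diff[OF IH this] show ?case by simp
qed

lemma aug_ker_plus_if_aug_eq_0:
  assumes amalgam: "is_free_amalgam M0 M1 M2" and "aug x = 0"
  shows "x \<in> aug_ker M1 + aug_ker M2"
proof -
  have "Poly_Mapping.single 1 (aug y) - y \<in> aug_ker M1 + aug_ker M2" for y
    using subset_UNIV
  proof (induction y rule: frag_induction)
    case zero then show ?case by (simp add: aug_eq_pairing zero_in_aug_ker_plus)
  next
    case (one w)
    obtain u where "u \<in> lists (letters M1 M2)" "eval_word u = w"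
      using amalgam unfolding is_free_amalgam_def by blast
    then show ?case
      using frag_of_eval_word_in_aug_ker_plus[of u M1 M2] by (simp add: aug_eq_pairing)
  next
    case (diff a b)
    have "Poly_Mapping.single 1 (aug (a - b)) - (a - b)
        = (Poly_Mapping.single 1 (aug a) - a) - (Poly_Mapping.single 1 (aug b) - b)"
      by (simp add: aug_diff single_diff)
    with diff show ?case by (metis aug_ker_plus_diff)
  qed
  from aug_ker_plus_diff[OF zero_in_aug_ker_plus this[of x]] show ?thesis
    using assms(2) by simp
qed

lemma tcoset_eq_iff: "tcoset M x = tcoset M y \<longleftrightarrow> x - y \<in> aug_ker M"
proof
  assume "tcoset M x = tcoset M y"
  moreover have "y \<in> tcoset M y" by (simp add: tcoset_def aug_ker.zero)
  ultimately have "y \<in> tcoset M x" by simp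
  then show "x - y \<in> aug_ker M" by (simp add: tcoset_def)
next
  assume xy: "x - y \<in> aug_ker M"
  have "x - z \<in> aug_ker M \<longleftrightarrow> y - z \<in> aug_ker M" for z
    using aug_ker.add[OF xy, of "y - z"] aug_ker_diff[of "x - z" M "x - y"] xy by auto
  then show "tcoset M x = tcoset M y" by (simp add: tcoset_def)
qed

lemma tcoset_coarsen:
  assumes "M0 \<subseteq> M"
  shows "{y. \<exists>x\<in>tcoset M0 z. x - y \<in> aug_ker M} = tcoset M z"
proof (intro set_eqI iffI)
  fix y assume "y \<in> {y. \<exists>x\<in>tcoset M0 z. x - y \<in> aug_ker M}"
  then obtain x where "z - x \<in> aug_ker M" "x - y \<in> aug_ker M"
    using aug_ker_mono[OF assms] by (auto simp: tcoset_def)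
  from aug_ker.add[OF this] show "y \<in> tcoset M z" by (simp add: tcoset_def)
next
  fix y assume "y \<in> tcoset M z"
  moreover have "z \<in> tcoset M0 z" by (simp add: tcoset_def aug_ker.zero)
  ultimately show "y \<in> {y. \<exists>x\<in>tcoset M0 z. x - y \<in> aug_ker M}"
    unfolding tcoset_def by blast
qed

lemma tens_i_tcoset:
  "M0 \<subseteq> M1 \<Longrightarrow> M0 \<subseteq> M2 \<Longrightarrow> tens_i M1 M2 (tcoset M0 z) = (tcoset M1 z, tcoset M2 z)"
  by (simp add: tens_i_def tcoset_coarsen)

lemma tens_p_tcoset: "tens_p (tcoset M1 x, tcoset M2 y) = aug x - aug y"
  unfolding tens_p_def
proof (rule the_equality)
  show "\<exists>x'\<in>fst (tcoset M1 x, tcoset M2 y). \<exists>y'\<in>snd (tcoset M1 x, tcoset M2 y). aug x - aug y = aug x' - aug y'"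
    using aug_ker.zero[of M1] aug_ker.zero[of M2]
    by (simp add: tcoset_def) (metis diff_self)
next
  fix n assume "\<exists>x'\<in>fst (tcoset M1 x, tcoset M2 y). \<exists>y'\<in>snd (tcoset M1 x, tcoset M2 y). n = aug x' - aug y'"
  then obtain x' y' where "x - x' \<in> aug_ker M1" "y - y' \<in> aug_ker M2" "n = aug x' - aug y'"
    by (auto simp: tcoset_def)
  then show "n = aug x - aug y"
    using aug_eq_0_if_aug_ker[of "x - x'" M1] aug_eq_0_if_aug_ker[of "y - y'" M2] by (simp add: aug_diff)
qed

lemma inj_on_tens_i:
  assumes "M0 \<subseteq> M1 \<inter> M2" and "is_free_amalgam M0 M1 M2"
  shows "inj_on (tens_i M1 M2) (tens M0)"
proof (rule inj_onI)
  fix c c' assume "c \<in> tens M0" "c' \<in> tens M0" and eq: "tens_i M1 M2 c = tens_i M1 M2 c'"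
  then obtain z z' where c: "c = tcoset M0 z" "c' = tcoset M0 z'"
    by (auto simp: tens_def)
  with eq have "z - z' \<in> aug_ker M1 \<inter> aug_ker M2"
    using assms(1) by (simp add: tens_i_tcoset tcoset_eq_iff)
  then show "c = c'"
    using aug_ker_Int[OF assms(2)] by (auto simp: c tcoset_eq_iff)
qed

lemma image_tens_i:
  assumes "M0 \<subseteq> M1 \<inter> M2" and "is_free_amalgam M0 M1 M2"
  shows "tens_i M1 M2 ` tens M0 = {b \<in> tens M1 \<times> tens M2. tens_p b = 0}"
proof (intro equalityI subsetI)
  fix b assume "b \<in> tens_i M1 M2 ` tens M0"
  then show "b \<in> {b \<in> tens M1 \<times> tens M2. tens_p b = 0}"
    using assms(1) by (auto simp: tens_def tens_i_tcoset tens_p_tcoset)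
next
  fix b assume "b \<in> {b \<in> tens M1 \<times> tens M2. tens_p b = 0}"
  then obtain x y where b: "b = (tcoset M1 x, tcoset M2 y)" and "aug (x - y) = 0"
    by (auto simp: tens_def tens_p_tcoset aug_eq_pairing pairing_diff)
  then obtain k1 k2 where k: "k1 \<in> aug_ker M1" "k2 \<in> aug_ker M2" "x - y = k1 + k2"
    using aug_ker_plus_if_aug_eq_0[OF assms(2)] by (metis set_plus_elim)
  then have "tcoset M1 (x - k1) = tcoset M1 x" "tcoset M2 (x - k1) = tcoset M2 y"
    by (simp_all add: tcoset_eq_iff aug_ker.neg algebra_simps)
  then have "b = tens_i M1 M2 (tcoset M0 (x - k1))"
    using assms(1) by (simp add: b tens_i_tcoset)
  then show "b \<in> tens_i M1 M2 ` tens M0"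
    by (simp add: tens_def)
qed

lemma surj_tens_p: "tens_p ` (tens M1 \<times> tens M2) = UNIV"
proof -
  have "n \<in> tens_p ` (tens M1 \<times> tens M2)" for n
  proof
    show "n = tens_p (tcoset M1 (Poly_Mapping.single 1 n), tcoset M2 0)"
      by (simp add: tens_p_tcoset aug_def)
    show "(tcoset M1 (Poly_Mapping.single 1 n), tcoset M2 0) \<in> tens M1 \<times> tens M2"
      by (simp add: tens_def)
  qed
  then show ?thesis by blast
qed

theorem lemma2p2:
  fixes M0 M1 M2 :: "'a::monoid_mult set"
  assumes "submonoid M0" and "submonoid M1" and "submonoid M2"
    and "M0 \<subseteq> M1 \<inter> M2"
    and "is_free_amalgam M0 M1 M2"
  shows "inj_on (tens_i M1 M2) (tens M0)
    \<and> tens_i M1 M2 ` tens M0 = {b \<in> tens M1 \<times> tens M2. tens_p b = 0}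
    \<and> tens_p ` (tens M1 \<times> tens M2) = UNIV"
  using inj_on_tens_i[OF assms(4,5)] image_tens_i[OF assms(4,5)] surj_tens_p by blast

end
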